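(* Let $\mathscr V\subset\mathbb{R}_{\max}^n$ be a max-plus cone with full support. If $\mathscr V$ is contained in a half-space $\mathscr H$, then there exists a half-space $\mathscr H'$ such that $\mathscr V\subset\mathscr H'\subset\mathscr H$ and $\mathscr H'$ is minimal for inclusion among half-spaces containing $\mathscr V$ (i.e. there is no half-space $\mathscr H''$ with $\mathscr V\subset\mathscr H''\subsetneq\mathscr H'$).
   Context: $\mathbb{R}_{\max}=\mathbb{R}\cup\{-\infty\}$ with $a\oplus b=\max(a,b)$, $ab=a+b$. A max-plus cone is a set $\mathscr V\subset\mathbb{R}_{\max}^n$ with $\lambda u\oplus\mu v\in\mathscr V$ for all $u,v\in\mathscr V$, $\lambda,\mu\in\mathbb{R}_{\max}$ (entrywise operations). A half-space of $\mathbb{R}_{\max}^n$ is a set $\{x:\bigoplus_{i=1}^n a_ix_i\le\bigoplus_{j=1}^n b_jx_j\}$ with $a,b\in\mathbb{R}_{\max}^n$. $\mathscr V$ has full support if for every $k\in\{1,\dots,n\}$ some $v\in\mathscr V$ has $v_k\neq-\infty$. *)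

theory Defs
  imports "HOL-Library.Extended_Real"
begin

text \<open>R_max = R \<union> {-\<infinity>} is modelled as the ereals different from +\<infinity>;
  max-plus sum is max, max-plus product is (+) (note -\<infinity> + a = -\<infinity>).
  Vectors of R_max^n are functions from a finite index type 'n (with n = CARD('n))
  into R_max.\<close>

definition Rmax :: "ereal set" where
  "Rmax = {x. x \<noteq> \<infinity>}"

definition Rmax_vecs :: "('n::finite \<Rightarrow> ereal) set" where
  "Rmax_vecs = {x. \<forall>i. x i \<in> Rmax}"

definition maxplus_cone :: "('n::finite \<Rightarrow> ereal) set \<Rightarrow> bool" where
  "maxplus_cone V \<longleftrightarrow> V \<subseteq> Rmax_vecs \<and>
     (\<forall>u\<in>V. \<forall>v\<in>V. \<forall>l\<in>Rmax. \<forall>m\<in>Rmax. (\<lambda>i. max (l + u i) (m + v i)) \<in> V)"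

definition halfspace_of :: "('n::finite \<Rightarrow> ereal) \<Rightarrow> ('n \<Rightarrow> ereal) \<Rightarrow> ('n \<Rightarrow> ereal) set" where
  "halfspace_of a b = {x \<in> Rmax_vecs. (SUP i. a i + x i) \<le> (SUP j. b j + x j)}"

definition halfspace :: "('n::finite \<Rightarrow> ereal) set \<Rightarrow> bool" where
  "halfspace H \<longleftrightarrow> (\<exists>a\<in>Rmax_vecs. \<exists>b\<in>Rmax_vecs. H = halfspace_of a b)"

definition full_support :: "('n::finite \<Rightarrow> ereal) set \<Rightarrow> bool" where
  "full_support V \<longleftrightarrow> (\<forall>k. \<exists>v\<in>V. v k \<noteq> -\<infinity>)"

end

theory Submission
  imports Defs
begin

text \<open>Every halfspace has a representation \<open>a x \<le> b x\<close> in which \<open>a\<close> and \<open>b\<close> have disjoint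
  supports, and inclusion between such halfspaces is controlled by the coefficients: if
  \<open>H(a', b') \<subseteq> H(a, b)\<close> and \<open>a\<close> is not identically \<open>-\<infinity>\<close>, then after adding a constant to
  \<open>a'\<close> and \<open>b'\<close> we get \<open>a \<le> a'\<close> and \<open>b' \<le> b\<close>. Order the separated representations of halfspaces
  containing \<open>V\<close> by increasing \<open>a\<close> and decreasing \<open>b\<close>. Full support of \<open>V\<close> bounds \<open>a\<close> from above,
  and the coordinatewise sup and inf of a chain again represent a halfspace containing \<open>V\<close>, so
  Zorn's lemma yields a maximal representation above one of \<open>H\<close>. Its halfspace is minimal: a
  smaller halfspace containing \<open>V\<close> would, after the shift, give a representation above it.\<close>

lemma SUP_attained_finite:
  fixes g :: "'i::finite \<Rightarrow> 'a::complete_linorder"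
  obtains j where "(SUP i. g i) = g j"
  using Max_in[of "range g"] Max_Sup[of "range g"] by auto

lemma SUP_le_SUP_finite_iff:
  fixes f g :: "'i::finite \<Rightarrow> 'a::complete_linorder"
  shows "(SUP i. f i) \<le> (SUP j. g j) \<longleftrightarrow> (\<forall>i. \<exists>j. f i \<le> g j)"
proof
  assume le: "(SUP i. f i) \<le> (SUP j. g j)"
  obtain j where "(SUP j. g j) = g j" by (rule SUP_attained_finite)
  with le show "\<forall>i. \<exists>j. f i \<le> g j" by (metis SUP_upper UNIV_I order_trans)
qed (meson SUP_least SUP_upper2 UNIV_I)

text \<open>The hypothesis on the supremum is needed because \<open>\<infinity> + -\<infinity> = \<infinity>\<close> in the extended reals.\<close>

lemma SUP_add_le_INF_add_ereal:
  fixes f g :: "'a \<Rightarrow> ereal"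
  assumes le: "\<And>p q. p \<in> C \<Longrightarrow> q \<in> C \<Longrightarrow> f p + u \<le> g q + v"
    and "(SUP p\<in>C. f p) \<noteq> \<infinity>" "u \<noteq> \<infinity>" "v \<noteq> \<infinity>"
  shows "(SUP p\<in>C. f p) + u \<le> (INF q\<in>C. g q) + v"
proof (cases u)
  case u: (real r)
  show ?thesis
  proof (cases v)
    case v: (real s)
    have "(SUP p\<in>C. f p) \<le> (INF q\<in>C. g q) + ereal (s - r)"
    proof (rule SUP_least)
      fix p assume p: "p \<in> C"
      have "f p - ereal (s - r) \<le> g q" if "q \<in> C" for q
        using le[OF p that] u v by (cases "f p"; cases "g q") auto
      then have "f p - ereal (s - r) \<le> (INF q\<in>C. g q)" by (rule INF_greatest)
      then show "f p \<le> (INF q\<in>C. g q) + ereal (s - r)"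
        by (cases "f p"; cases "(INF q\<in>C. g q)") auto
    qed
    then show ?thesis using u v
      by (cases "(SUP p\<in>C. f p)"; cases "(INF q\<in>C. g q)") auto
  next
    case v: MInf
    show ?thesis
    proof (cases "\<exists>q\<in>C. g q \<noteq> \<infinity>")
      case True
      then obtain q where q: "q \<in> C" "g q \<noteq> \<infinity>" by blast
      have "f p = -\<infinity>" if "p \<in> C" for p
        using le[OF that q(1)] q(2) u v by (cases "f p"; cases "g q") auto
      then have "(SUP p\<in>C. f p) = -\<infinity>" by (auto simp: Sup_eq_MInfty)
      then show ?thesis using u by simp
    next
      case False
      then have "(INF q\<in>C. g q) = \<infinity>" by (auto simp: Inf_eq_PInfty)
      then show ?thesis by simp
    qed
  qed (use assms in auto)
next
  case MInf
  then show ?thesis using assms(2) by (cases "(SUP p\<in>C. f p)") auto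
qed (use assms in auto)

lemma Rmax_vecs_iff: "x \<in> Rmax_vecs \<longleftrightarrow> (\<forall>i. x i \<noteq> \<infinity>)"
  unfolding Rmax_vecs_def Rmax_def by auto

lemma mem_halfspace_of:
  "x \<in> halfspace_of a b \<longleftrightarrow> x \<in> Rmax_vecs \<and> (\<forall>i. \<exists>j. a i + x i \<le> b j + x j)"
  unfolding halfspace_of_def by (simp add: SUP_le_SUP_finite_iff)

lemma halfspace_of_subset_Rmax_vecs: "halfspace_of a b \<subseteq> Rmax_vecs"
  by (auto simp: mem_halfspace_of)

lemma halfspace_subset_Rmax_vecs: "halfspace H \<Longrightarrow> H \<subseteq> Rmax_vecs"
  unfolding halfspace_def using halfspace_of_subset_Rmax_vecs by blast

lemma halfspace_of_add_const:
  "halfspace_of (\<lambda>k. a k + ereal t) (\<lambda>k. b k + ereal t) = halfspace_of a b"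
proof -
  have "a i + ereal t + x i \<le> b j + ereal t + x j \<longleftrightarrow> a i + x i \<le> b j + x j" for i j x
    by (cases "a i"; cases "x i"; cases "b j"; cases "x j") auto
  then show ?thesis by (simp add: mem_halfspace_of set_eq_iff)
qed

lemma halfspace_of_mono:
  assumes "a \<le> c" "d \<le> b"
  shows "halfspace_of c d \<subseteq> halfspace_of a b"
proof
  fix x assume "x \<in> halfspace_of c d"
  moreover have "a i + x i \<le> b j + x j" if "c i + x i \<le> d j + x j" for i j
    using that le_funD[OF assms(1), of i] le_funD[OF assms(2), of j]
    by (meson add_right_mono order_trans)
  ultimately show "x \<in> halfspace_of a b" by (meson mem_halfspace_of)
qed

lemma halfspace_of_neg_inf:
  fixes b :: "'n::finite \<Rightarrow> ereal"
  shows "halfspace_of (\<lambda>_. -\<infinity>) b = Rmax_vecs"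
proof -
  have "-\<infinity> + x i \<le> b i + x i" if "x \<in> Rmax_vecs" for x i
    using that by (cases "x i") (auto simp: Rmax_vecs_iff)
  then show ?thesis unfolding set_eq_iff mem_halfspace_of by blast
qed

definition separated :: "('n \<Rightarrow> ereal) \<Rightarrow> ('n \<Rightarrow> ereal) \<Rightarrow> bool" where
  "separated a b \<longleftrightarrow> (\<forall>k. a k = -\<infinity> \<or> b k = -\<infinity>)"

lemma halfspace_of_eq_separated:
  fixes a b :: "'n::finite \<Rightarrow> ereal"
  assumes "a \<in> Rmax_vecs" "b \<in> Rmax_vecs"
  obtains a' b' where "a' \<in> Rmax_vecs" "b' \<in> Rmax_vecs" "separated a' b'"
    "halfspace_of a' b' = halfspace_of a b"
proof
  define a' where "a' = (\<lambda>k. if a k \<le> b k then -\<infinity> else a k)"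
  define b' where "b' = (\<lambda>k. if a k \<le> b k then b k else -\<infinity>)"
  show "a' \<in> Rmax_vecs" "b' \<in> Rmax_vecs" using assms by (auto simp: Rmax_vecs_iff a'_def b'_def)
  show "separated a' b'" by (auto simp: separated_def a'_def b'_def)
  show "halfspace_of a' b' = halfspace_of a b"
  proof (intro set_eqI iffI)
    fix x assume "x \<in> halfspace_of a' b'"
    then have x: "x \<in> Rmax_vecs" "\<forall>i. \<exists>j. a' i + x i \<le> b' j + x j" by (auto simp: mem_halfspace_of)
    have "\<exists>j. a i + x i \<le> b j + x j" for i
    proof (cases "a i \<le> b i")
      case True then show ?thesis by (auto intro: add_right_mono)
    next
      case False
      then have "a' i = a i" by (simp add: a'_def)
      with x(2) obtain j where "a i + x i \<le> b' j + x j" by metis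
      moreover have "b' j \<le> b j" by (simp add: b'_def)
      ultimately show ?thesis by (meson add_right_mono order_trans)
    qed
    with x(1) show "x \<in> halfspace_of a b" by (simp add: mem_halfspace_of)
  next
    fix x assume "x \<in> halfspace_of a b"
    then have x: "x \<in> Rmax_vecs" "\<forall>i. \<exists>j. a i + x i \<le> b j + x j" by (auto simp: mem_halfspace_of)
    obtain j0 where j0: "(SUP j. b j + x j) = b j0 + x j0" by (rule SUP_attained_finite)
    have max: "b j + x j \<le> b j0 + x j0" for j by (metis j0 SUP_upper UNIV_I)
    have below: "a' i + x i \<le> b j0 + x j0" for i
    proof -
      obtain j where "a i + x i \<le> b j + x j" using x(2) by blast
      moreover have "a' i \<le> a i" by (simp add: a'_def)
      ultimately show ?thesis using max[of j] by (meson add_right_mono order_trans)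
    qed
    have "\<exists>j. a' i + x i \<le> b' j + x j" for i
    proof (cases "a j0 \<le> b j0")
      case True
      then show ?thesis using below[of i] by (auto simp: b'_def)
    next
      case False
      \<comment> \<open>Then the maximum of \<open>b + x\<close> is \<open>-\<infinity>\<close>, since at \<open>j0\<close> it is exceeded by \<open>a + x\<close> otherwise.\<close>
      obtain j where "a j0 + x j0 \<le> b j + x j" using x(2) by blast
      then have "a j0 + x j0 \<le> b j0 + x j0" using max[of j] by simp
      with False x(1) assms(2) have "x j0 = -\<infinity>"
        by (cases "a j0"; cases "b j0"; cases "x j0") (auto simp: Rmax_vecs_iff)
      then have "a' i + x i = -\<infinity>" using below[of i] assms(2) by (cases "b j0") (auto simp: Rmax_vecs_iff)
      then show ?thesis by (metis ereal_less_eq(2))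
    qed
    with x(1) show "x \<in> halfspace_of a' b'" by (simp add: mem_halfspace_of)
  qed
qed

definition unit_vec :: "'n \<Rightarrow> 'n \<Rightarrow> ereal" where
  "unit_vec i = (\<lambda>k. if k = i then 0 else -\<infinity>)"

lemma unit_vec_mem_halfspace_of_iff:
  assumes "separated a b" "a \<in> Rmax_vecs" "b \<in> Rmax_vecs"
  shows "unit_vec i \<in> halfspace_of a b \<longleftrightarrow> a i = -\<infinity>"
proof
  assume "unit_vec i \<in> halfspace_of a b"
  then obtain j where j: "a i \<le> b j + unit_vec i j"
    unfolding mem_halfspace_of by (metis add.right_neutral unit_vec_def)
  show "a i = -\<infinity>"
  proof (cases "j = i")
    case True
    with j assms(1) show ?thesis by (auto simp: separated_def unit_vec_def)
  next
    case False
    with j assms(3) show ?thesis by (cases "b j") (auto simp: Rmax_vecs_iff unit_vec_def)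
  qed
next
  assume ai: "a i = -\<infinity>"
  have "a k + unit_vec i k = -\<infinity>" for k
    using ai assms(2) by (cases "a k") (auto simp: Rmax_vecs_iff unit_vec_def)
  moreover have "unit_vec i \<in> Rmax_vecs" by (simp add: Rmax_vecs_iff unit_vec_def)
  ultimately show "unit_vec i \<in> halfspace_of a b"
    unfolding mem_halfspace_of by (metis ereal_less_eq(2))
qed

lemma halfspace_of_subset_coeff_le:
  assumes R: "a \<in> Rmax_vecs" "b \<in> Rmax_vecs" "a' \<in> Rmax_vecs" "b' \<in> Rmax_vecs"
    and sep: "separated a b" "separated a' b'"
    and sub: "halfspace_of a' b' \<subseteq> halfspace_of a b"
    and fin: "a' i \<noteq> -\<infinity>" "b' j \<noteq> -\<infinity>"
  shows "a i + b' j \<le> b j + a' i"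
proof (cases "a i = -\<infinity>")
  case False
  have "i \<noteq> j" using sep(2) fin by (auto simp: separated_def)
  have "b i = -\<infinity>" using sep(1) False by (auto simp: separated_def)
  have "a' j = -\<infinity>" using sep(2) fin(2) by (auto simp: separated_def)
  \<comment> \<open>A point on the boundary of the smaller halfspace, supported on the coordinates i and j.\<close>
  define w where "w = (\<lambda>k. if k = i then b' j else if k = j then a' i else -\<infinity>)"
  have "w \<in> halfspace_of a' b'"
    unfolding mem_halfspace_of
  proof (intro conjI allI)
    show "w \<in> Rmax_vecs" using R(3,4) by (auto simp: w_def Rmax_vecs_iff)
    fix k
    show "\<exists>l. a' k + w k \<le> b' l + w l"
    proof (cases "k = i")
      case True
      then show ?thesis using \<open>i \<noteq> j\<close> by (intro exI[of _ j]) (simp add: w_def add.commute)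
    next
      case False
      then have "a' k + w k = -\<infinity>" using \<open>a' j = -\<infinity>\<close> R(3) fin(1)
        by (cases "a' k"; cases "a' i") (auto simp: w_def Rmax_vecs_iff)
      then show ?thesis by (metis ereal_less_eq(2))
    qed
  qed
  with sub have "w \<in> halfspace_of a b" by blast
  then obtain l where l: "a i + w i \<le> b l + w l" unfolding mem_halfspace_of by blast
  have "l = j"
  proof (rule ccontr)
    assume "l \<noteq> j"
    then have "b l + w l = -\<infinity>" using \<open>b i = -\<infinity>\<close> R(2) R(4) fin(2)
      by (cases "b l"; cases "b' j") (auto simp: w_def Rmax_vecs_iff)
    moreover have "a i + w i \<noteq> -\<infinity>" using False R(1,4) fin(2)
      by (cases "a i"; cases "b' j") (auto simp: w_def Rmax_vecs_iff)
    ultimately show False using l by (metis ereal_infty_less_eq(2))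
  qed
  with l \<open>i \<noteq> j\<close> show ?thesis by (simp add: w_def)
next
  case True
  with R(4) show ?thesis by (cases "b' j") (auto simp: Rmax_vecs_iff)
qed

lemma halfspace_of_subset_shift:
  assumes R: "a \<in> Rmax_vecs" "b \<in> Rmax_vecs" "a' \<in> Rmax_vecs" "b' \<in> Rmax_vecs"
    and sep: "separated a b" "separated a' b'"
    and sub: "halfspace_of a' b' \<subseteq> halfspace_of a b"
    and "a i0 \<noteq> -\<infinity>"
  obtains t where "a \<le> (\<lambda>k. a' k + ereal t)" "(\<lambda>k. b' k + ereal t) \<le> b"
proof -
  have supp: "a' i \<noteq> -\<infinity>" if "a i \<noteq> -\<infinity>" for i
    using sub that unit_vec_mem_halfspace_of_iff[OF sep(1) R(1,2)]
      unit_vec_mem_halfspace_of_iff[OF sep(2) R(3,4)] by blast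
  obtain i1 where i1: "a i1 \<noteq> -\<infinity>"
    and min: "\<And>i. a i \<noteq> -\<infinity> \<Longrightarrow>
      real_of_ereal (a' i1) - real_of_ereal (a i1) \<le> real_of_ereal (a' i) - real_of_ereal (a i)"
    using ex_is_arg_min_if_finite[of "{i. a i \<noteq> -\<infinity>}"
        "\<lambda>i. real_of_ereal (a' i) - real_of_ereal (a i)"] \<open>a i0 \<noteq> -\<infinity>\<close>
    by (auto simp: is_arg_min_linorder)
  define t where "t = real_of_ereal (a i1) - real_of_ereal (a' i1)"
  show thesis
  proof
    show "a \<le> (\<lambda>k. a' k + ereal t)"
    proof (rule le_funI)
      fix k
      show "a k \<le> a' k + ereal t"
      proof (cases "a k = -\<infinity>")
        case False
        with supp[OF False] supp[OF i1] min[OF False] i1 R(1,3) show ?thesis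
          by (cases "a k"; cases "a' k"; cases "a i1"; cases "a' i1") (auto simp: t_def Rmax_vecs_iff)
      qed simp
    qed
    show "(\<lambda>k. b' k + ereal t) \<le> b"
    proof (rule le_funI)
      fix k
      show "b' k + ereal t \<le> b k"
      proof (cases "b' k = -\<infinity>")
        case False
        with halfspace_of_subset_coeff_le[OF R sep sub supp[OF i1] False] i1 supp[OF i1] R
        show ?thesis
          by (cases "b k"; cases "b' k"; cases "a i1"; cases "a' i1") (auto simp: t_def Rmax_vecs_iff)
      qed simp
    qed
  qed
qed

lemma halfspace_separated_rep:
  fixes H :: "('n::finite \<Rightarrow> ereal) set"
  assumes "halfspace H"
  obtains a b where "a \<in> Rmax_vecs" "b \<in> Rmax_vecs" "separated a b" "H = halfspace_of a b"
  using assms halfspace_of_eq_separated unfolding halfspace_def by metis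

lemma chain_finite_subset_has_upper_bound:
  assumes "finite F" "F \<noteq> {}" "F \<subseteq> C"
    and chain: "\<And>p q. p \<in> C \<Longrightarrow> q \<in> C \<Longrightarrow> R p q \<or> R q p" and "transp R"
  obtains r where "r \<in> C" "\<And>p. p \<in> F \<Longrightarrow> R p r"
proof -
  from assms(1-3) have "\<exists>r\<in>C. \<forall>p\<in>F. R p r"
  proof (induction F rule: finite_ne_induct)
    case (singleton p)
    then show ?case using chain[of p p] by auto
  next
    case (insert p F)
    then obtain r where r: "r \<in> C" "\<forall>q\<in>F. R q r" by auto
    from insert.prems have "p \<in> C" by simp
    from chain[OF this r(1)] show ?case
    proof
      assume "R p r"
      with r show ?case by blast
    next
      assume "R r p"
      with r chain[of p p] \<open>p \<in> C\<close> transpD[OF \<open>transp R\<close>] show ?case by blast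
    qed
  qed
  with that show thesis by blast
qed

definition coeff_le :: "('n \<Rightarrow> ereal) \<times> ('n \<Rightarrow> ereal) \<Rightarrow> ('n \<Rightarrow> ereal) \<times> ('n \<Rightarrow> ereal) \<Rightarrow> bool" where
  "coeff_le p q \<longleftrightarrow> fst p \<le> fst q \<and> snd q \<le> snd p"

lemma transp_coeff_le: "transp coeff_le"
  by (auto intro!: transpI simp: coeff_le_def intro: order_trans)

definition separated_reps :: "('n::finite \<Rightarrow> ereal) set \<Rightarrow> (('n \<Rightarrow> ereal) \<times> ('n \<Rightarrow> ereal)) set" where
  "separated_reps V = {p. fst p \<in> Rmax_vecs \<and> snd p \<in> Rmax_vecs \<and>
     separated (fst p) (snd p) \<and> V \<subseteq> halfspace_of (fst p) (snd p)}"

lemma halfspace_of_coeff_bound: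
  assumes "v \<in> halfspace_of a b" "v k \<noteq> -\<infinity>" "b \<le> b0"
  shows "a k \<le> (SUP j. b0 j + v j) - v k"
proof -
  obtain j where "a k + v k \<le> b j + v j" "v \<in> Rmax_vecs"
    using assms(1) by (auto simp: mem_halfspace_of)
  moreover have "b j + v j \<le> (SUP j. b0 j + v j)"
    using le_funD[OF assms(3)] by (meson SUP_upper2 UNIV_I add_right_mono)
  ultimately have "a k + v k \<le> (SUP j. b0 j + v j)" "v k \<noteq> \<infinity>"
    by (auto simp: Rmax_vecs_iff)
  with assms(2) show ?thesis
    by (cases "v k"; cases "a k"; cases "(SUP j. b0 j + v j)") auto
qed

lemma mem_halfspace_of_chain_limit:
  assumes x: "x \<in> Rmax_vecs" "\<And>p. p \<in> C \<Longrightarrow> x \<in> halfspace_of (fst p) (snd p)"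
    and chain: "\<And>p q. p \<in> C \<Longrightarrow> q \<in> C \<Longrightarrow> coeff_le p q \<or> coeff_le q p"
    and fin: "\<And>i. (SUP p\<in>C. fst p i) \<noteq> \<infinity>"
  shows "x \<in> halfspace_of (\<lambda>i. SUP p\<in>C. fst p i) (\<lambda>j. INF p\<in>C. snd p j)"
proof -
  \<comment> \<open>Otherwise finitely many members of \<open>C\<close> witness the failure for every \<open>j\<close>, and an upper
    bound of them in \<open>C\<close> would violate its own halfspace.\<close>
  have common_j: "\<exists>j. \<forall>p\<in>C. \<forall>q\<in>C. fst p i + x i \<le> snd q j + x j" for i
  proof (rule ccontr)
    assume "\<nexists>j. \<forall>p\<in>C. \<forall>q\<in>C. fst p i + x i \<le> snd q j + x j"
    then have "\<forall>j. \<exists>p. p \<in> C \<and> (\<exists>q. q \<in> C \<and> \<not> fst p i + x i \<le> snd q j + x j)"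
      by blast
    then obtain P where P: "\<forall>j. P j \<in> C \<and> (\<exists>q. q \<in> C \<and> \<not> fst (P j) i + x i \<le> snd q j + x j)"
      by (rule choice[THEN exE])
    then have "\<forall>j. \<exists>q. q \<in> C \<and> \<not> fst (P j) i + x i \<le> snd q j + x j" by blast
    then obtain Q where Q: "\<forall>j. Q j \<in> C \<and> \<not> fst (P j) i + x i \<le> snd (Q j) j + x j"
      by (rule choice[THEN exE])
    have PQ: "range P \<union> range Q \<subseteq> C" using P Q by blast
    obtain r where "r \<in> C" and r: "\<And>p. p \<in> range P \<union> range Q \<Longrightarrow> coeff_le p r"
      by (rule chain_finite_subset_has_upper_bound[OF _ _ PQ chain transp_coeff_le]) simp_all
    obtain j where "fst r i + x i \<le> snd r j + x j"
      using x(2)[OF \<open>r \<in> C\<close>] by (auto simp: mem_halfspace_of)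
    moreover have "fst (P j) i \<le> fst r i" "snd r j \<le> snd (Q j) j"
      using r[of "P j"] r[of "Q j"] by (auto simp: coeff_le_def le_fun_def)
    ultimately have "fst (P j) i + x i \<le> snd (Q j) j + x j"
      by (meson add_right_mono order_trans)
    with Q show False by blast
  qed
  have "\<exists>j. (SUP p\<in>C. fst p i) + x i \<le> (INF q\<in>C. snd q j) + x j" for i
  proof -
    obtain j where "\<forall>p\<in>C. \<forall>q\<in>C. fst p i + x i \<le> snd q j + x j" using common_j by blast
    then have "(SUP p\<in>C. fst p i) + x i \<le> (INF q\<in>C. snd q j) + x j"
      using fin[of i] x(1) by (intro SUP_add_le_INF_add_ereal) (auto simp: Rmax_vecs_iff)
    then show ?thesis by blast
  qed
  with x(1) show ?thesis by (simp add: mem_halfspace_of)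
qed

lemma separated_SUP_INF:
  assumes "\<And>p. p \<in> C \<Longrightarrow> separated (fst p) (snd p)"
  shows "separated (\<lambda>i. SUP p\<in>C. fst p i) (\<lambda>j. INF p\<in>C. snd p j)"
  unfolding separated_def
proof
  fix k
  show "(SUP p\<in>C. fst p k) = -\<infinity> \<or> (INF p\<in>C. snd p k) = -\<infinity>"
  proof (cases "\<exists>p\<in>C. fst p k \<noteq> -\<infinity>")
    case True
    then obtain p where "p \<in> C" "fst p k \<noteq> -\<infinity>" by blast
    with assms[of p] have "snd p k = -\<infinity>" unfolding separated_def by blast
    with \<open>p \<in> C\<close> show ?thesis by (metis INF_lower ereal_infty_less_eq(2))
  next
    case False
    then show ?thesis by (auto simp: Sup_eq_MInfty)
  qed
qed

lemma full_support_SUP_coeff_finite: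
  assumes "full_support V" "b \<in> Rmax_vecs"
    and "\<And>p. p \<in> C \<Longrightarrow> V \<subseteq> halfspace_of (fst p) (snd p)" "\<And>p. p \<in> C \<Longrightarrow> snd p \<le> b"
  shows "(SUP p\<in>C. fst p i) \<noteq> \<infinity>"
proof (cases "C = {}")
  case False
  then obtain p0 where "p0 \<in> C" by blast
  obtain v where v: "v \<in> V" "v i \<noteq> -\<infinity>" using assms(1) by (auto simp: full_support_def)
  then have "v \<in> Rmax_vecs" using assms(3)[OF \<open>p0 \<in> C\<close>] halfspace_of_subset_Rmax_vecs by blast
  have "fst p i \<le> (SUP j. b j + v j) - v i" if "p \<in> C" for p
    using assms(3)[OF that] v halfspace_of_coeff_bound[of v "fst p" "snd p" i b] assms(4)[OF that]
    by blast
  then have "(SUP p\<in>C. fst p i) \<le> (SUP j. b j + v j) - v i" by (rule SUP_least)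
  moreover obtain j where "(SUP j. b j + v j) = b j + v j" by (rule SUP_attained_finite)
  ultimately show ?thesis using assms(2) \<open>v \<in> Rmax_vecs\<close> v(2)
    by (cases "b j"; cases "v j"; cases "v i") (auto simp: Rmax_vecs_iff)
qed (simp add: bot_ereal_def)

lemma separated_reps_chain_has_upper_bound:
  assumes fs: "full_support V" and C: "C \<subseteq> separated_reps V" "C \<noteq> {}"
    and chain: "\<And>p q. p \<in> C \<Longrightarrow> q \<in> C \<Longrightarrow> coeff_le p q \<or> coeff_le q p"
    and b: "b \<in> Rmax_vecs" "\<And>p. p \<in> C \<Longrightarrow> snd p \<le> b"
  defines "u \<equiv> (\<lambda>i. SUP p\<in>C. fst p i, \<lambda>j. INF p\<in>C. snd p j)"
  shows "u \<in> separated_reps V" "\<And>p. p \<in> C \<Longrightarrow> coeff_le p u"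
proof -
  have rep: "separated (fst p) (snd p)" "V \<subseteq> halfspace_of (fst p) (snd p)" if "p \<in> C" for p
    using that C(1) by (auto simp: separated_reps_def)
  obtain p0 where "p0 \<in> C" using C(2) by blast
  have sup_fin: "(SUP p\<in>C. fst p i) \<noteq> \<infinity>" for i
    using full_support_SUP_coeff_finite[OF fs b(1) rep(2) b(2)] .
  have inf_fin: "(INF p\<in>C. snd p j) \<noteq> \<infinity>" for j
  proof -
    have "(INF p\<in>C. snd p j) \<le> b j"
      using \<open>p0 \<in> C\<close> b(2)[OF \<open>p0 \<in> C\<close>] by (meson INF_lower2 le_funD)
    with b(1) show ?thesis by (auto simp: Rmax_vecs_iff)
  qed
  have "V \<subseteq> halfspace_of (fst u) (snd u)"
  proof
    fix x assume "x \<in> V"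
    then have "x \<in> Rmax_vecs" using rep(2)[OF \<open>p0 \<in> C\<close>] halfspace_of_subset_Rmax_vecs by blast
    with \<open>x \<in> V\<close> rep(2) show "x \<in> halfspace_of (fst u) (snd u)"
      unfolding u_def fst_conv snd_conv
      by (intro mem_halfspace_of_chain_limit[OF _ _ chain sup_fin]) auto
  qed
  with sup_fin inf_fin separated_SUP_INF[OF rep(1)] show "u \<in> separated_reps V"
    by (simp add: separated_reps_def u_def Rmax_vecs_iff)
  show "coeff_le p u" if "p \<in> C" for p
    using that by (auto simp: coeff_le_def u_def le_fun_def intro: SUP_upper INF_lower)
qed

lemma separated_reps_has_maximal:
  assumes "full_support V" "(a, b) \<in> separated_reps V"
  obtains c d where "(c, d) \<in> separated_reps V" "coeff_le (a, b) (c, d)"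
    "\<And>p. p \<in> separated_reps V \<Longrightarrow> coeff_le (c, d) p \<Longrightarrow> p = (c, d)"
proof -
  define A where "A = {p \<in> separated_reps V. coeff_le (a, b) p}"
  have "\<exists>m\<in>A. \<forall>p\<in>A. coeff_le m p \<longrightarrow> p = m"
  proof (rule predicate_Zorn)
    show "partial_order_on A (relation_of coeff_le A)"
      unfolding partial_order_on_def preorder_on_def refl_on_def trans_def antisym_def relation_of_def
      by (auto simp: coeff_le_def prod_eq_iff intro: order_trans order.antisym)
  next
    fix C assume C: "C \<in> Chains (relation_of coeff_le A)"
    then have "C \<subseteq> A" by (rule Chains_relation_of)
    have chain: "coeff_le p q \<or> coeff_le q p" if "p \<in> C" "q \<in> C" for p q
      using C that unfolding Chains_def relation_of_def by blast
    show "\<exists>u\<in>A. \<forall>p\<in>C. coeff_le p u"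
    proof (cases "C = {}")
      case True
      with assms(2) show ?thesis by (auto simp: A_def coeff_le_def)
    next
      case False
      then obtain p0 where "p0 \<in> C" by blast
      have "b \<in> Rmax_vecs" using assms(2) by (simp add: separated_reps_def)
      moreover have "snd p \<le> b" if "p \<in> C" for p
        using that \<open>C \<subseteq> A\<close> by (auto simp: A_def coeff_le_def)
      ultimately obtain u where "u \<in> separated_reps V" "\<And>p. p \<in> C \<Longrightarrow> coeff_le p u"
        using separated_reps_chain_has_upper_bound[OF assms(1) _ False chain] \<open>C \<subseteq> A\<close>
        unfolding A_def by blast
      moreover have "coeff_le (a, b) u"
        using \<open>p0 \<in> C\<close> \<open>C \<subseteq> A\<close> \<open>\<And>p. p \<in> C \<Longrightarrow> coeff_le p u\<close> transp_coeff_le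
        unfolding A_def by (blast dest: transpD)
      ultimately show ?thesis unfolding A_def by blast
    qed
  qed
  then obtain m where "m \<in> A" "\<And>p. p \<in> A \<Longrightarrow> coeff_le m p \<Longrightarrow> p = m" by blast
  with transp_coeff_le have "m \<in> separated_reps V" "coeff_le (a, b) m"
    "\<And>p. p \<in> separated_reps V \<Longrightarrow> coeff_le m p \<Longrightarrow> p = m"
    unfolding A_def by (blast dest: transpD)+
  with that[of "fst m" "snd m"] show thesis by simp
qed

lemma maximal_separated_rep_minimal:
  assumes rep: "(c, d) \<in> separated_reps V"
    and max: "\<And>p. p \<in> separated_reps V \<Longrightarrow> coeff_le (c, d) p \<Longrightarrow> p = (c, d)"
    and "c i \<noteq> -\<infinity>"
  shows "\<nexists>H. halfspace H \<and> V \<subseteq> H \<and> H \<subset> halfspace_of c d"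
proof
  assume "\<exists>H. halfspace H \<and> V \<subseteq> H \<and> H \<subset> halfspace_of c d"
  then obtain H where H: "halfspace H" "V \<subseteq> H" "H \<subset> halfspace_of c d" by blast
  obtain c' d' where cd': "c' \<in> Rmax_vecs" "d' \<in> Rmax_vecs" "separated c' d'" "H = halfspace_of c' d'"
    using halfspace_separated_rep[OF H(1)] .
  from rep have cd: "c \<in> Rmax_vecs" "d \<in> Rmax_vecs" "separated c d"
    by (auto simp: separated_reps_def)
  obtain t where t: "c \<le> (\<lambda>k. c' k + ereal t)" "(\<lambda>k. d' k + ereal t) \<le> d"
    using halfspace_of_subset_shift[OF cd(1,2) cd'(1,2) cd(3) cd'(3) _ \<open>c i \<noteq> -\<infinity>\<close>] H(3) cd'(4)
    by blast
  define p where "p = (\<lambda>k. c' k + ereal t, \<lambda>k. d' k + ereal t)"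
  have "p \<in> separated_reps V"
    using cd' H(2) by (auto simp: p_def separated_reps_def Rmax_vecs_iff separated_def halfspace_of_add_const)
  with t max have "p = (c, d)" by (simp add: p_def coeff_le_def)
  then have "halfspace_of c d = H" using cd'(4) halfspace_of_add_const[of c' t d'] by (simp add: p_def)
  with H(3) show False by simp
qed

theorem theorem3p5:
  fixes V H :: "('n::finite \<Rightarrow> ereal) set"
  assumes "maxplus_cone V" and "full_support V"
    and "halfspace H" and "V \<subseteq> H"
  shows "\<exists>H'. halfspace H' \<and> V \<subseteq> H' \<and> H' \<subseteq> H \<and>
           \<not> (\<exists>H''. halfspace H'' \<and> V \<subseteq> H'' \<and> H'' \<subset> H')"
proof (cases "\<exists>H0. halfspace H0 \<and> V \<subseteq> H0 \<and> H0 \<subseteq> H \<and> H0 \<noteq> Rmax_vecs")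
  case False
  \<comment> \<open>Then \<open>H = Rmax_vecs\<close>, and \<open>H\<close> itself is minimal.\<close>
  with assms(3,4) halfspace_subset_Rmax_vecs show ?thesis by blast
next
  case True
  then obtain H0 where H0: "halfspace H0" "V \<subseteq> H0" "H0 \<subseteq> H" "H0 \<noteq> Rmax_vecs" by blast
  obtain a b where ab: "a \<in> Rmax_vecs" "b \<in> Rmax_vecs" "separated a b" "H0 = halfspace_of a b"
    using halfspace_separated_rep[OF H0(1)] .
  obtain i where "a i \<noteq> -\<infinity>"
    using H0(4) ab(4) halfspace_of_neg_inf[of b] by (metis ext)
  have "(a, b) \<in> separated_reps V" using ab H0(2) by (simp add: separated_reps_def)
  then obtain c d where cd: "(c, d) \<in> separated_reps V" "coeff_le (a, b) (c, d)"
    "\<And>p. p \<in> separated_reps V \<Longrightarrow> coeff_le (c, d) p \<Longrightarrow> p = (c, d)"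
    using separated_reps_has_maximal[OF assms(2)] by blast
  have "c i \<noteq> -\<infinity>"
    using cd(2) \<open>a i \<noteq> -\<infinity>\<close> by (auto simp: coeff_le_def dest!: le_funD[of _ _ i])
  show ?thesis
  proof (intro exI conjI)
    show "halfspace (halfspace_of c d)" "V \<subseteq> halfspace_of c d"
      using cd(1) by (auto simp: halfspace_def separated_reps_def)
    show "halfspace_of c d \<subseteq> H"
      using halfspace_of_mono[of a c d b] cd(2) H0(3) ab(4) by (auto simp: coeff_le_def)
    show "\<nexists>H''. halfspace H'' \<and> V \<subseteq> H'' \<and> H'' \<subset> halfspace_of c d"
      by (rule maximal_separated_rep_minimal[OF cd(1,3) \<open>c i \<noteq> -\<infinity>\<close>])
  qed
qed

end
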